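(* (a) $crx_1(K_n)=crx_2(K_n)=3$ for every $n\ge 3$. (b) For every $k\ge 3$ there exists $N=N(k)$ such that $crx_k(K_n)=2k-1$ for all $n\ge N$.
   Context: $K_n$ is the complete graph on $n$ vertices. An edge-coloured cycle is rainbow if its edges have distinct colours. For a graph $G$ in which any $k$ vertices lie on a common cycle, $crx_k(G)$ is the minimum number of colours in an edge-colouring of $G$ such that every set of $k$ vertices of $G$ lies in some rainbow cycle. *)

theory Defs
  imports Main
begin

text \<open>The complete graph K_n has vertex set {0..<n} and an edge between any two
distinct vertices.\<close>

definition edge_colouring :: "nat \<Rightarrow> nat \<Rightarrow> (nat \<Rightarrow> nat \<Rightarrow> nat) \<Rightarrow> bool" where
  "edge_colouring n m c \<longleftrightarrow>
     (\<forall>u<n. \<forall>v<n. u \<noteq> v \<longrightarrow> c u v = c v u \<and> c u v < m)"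

definition rainbow_cycle :: "nat \<Rightarrow> (nat \<Rightarrow> nat \<Rightarrow> nat) \<Rightarrow> nat list \<Rightarrow> bool" where
  "rainbow_cycle n c vs \<longleftrightarrow>
     3 \<le> length vs \<and> distinct vs \<and> set vs \<subseteq> {..<n} \<and>
     inj_on (\<lambda>i. c (vs ! i) (vs ! ((i + 1) mod length vs))) {..<length vs}"

definition k_rainbow_cyclic :: "nat \<Rightarrow> nat \<Rightarrow> (nat \<Rightarrow> nat \<Rightarrow> nat) \<Rightarrow> bool" where
  "k_rainbow_cyclic n k c \<longleftrightarrow>
     (\<forall>S. S \<subseteq> {..<n} \<and> card S = k \<longrightarrow> (\<exists>vs. rainbow_cycle n c vs \<and> S \<subseteq> set vs))"

definition crx :: "nat \<Rightarrow> nat \<Rightarrow> nat" where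
  "crx k n = (LEAST m. \<exists>c. edge_colouring n m c \<and> k_rainbow_cyclic n k c)"

end

theory Submission
  imports Defs "HOL-Library.Ramsey" Complex_Main
begin

(*
  A rainbow cycle uses as many colours as it has edges, so at least 3.  If only
  2k - 2 colours are used, Ramsey's theorem yields, for large n, a monochromatic set H of k
  vertices; a rainbow cycle through H contains at most one edge inside H, so at least k - 1 of
  the arcs between consecutive vertices of H need an extra vertex, and the cycle has at least
  2k - 1 edges, hence uses at least 2k - 1 colours.

  For k <= 2 an explicit 3-colouring by residues mod 3 puts every pair of
  vertices on a rainbow triangle.  For k >= 3 colour K_n at random with 2k - 1 colours.  Every
  k-set S = {s_0, ..., s_(k-1)} lies on about n / (k - 1) cycles s_0 x_0 s_1 x_1 ... s_(k-1) of
  length 2k - 1 that all close with the edge s_(k-1) s_0 and are otherwise edge-disjoint.  Given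
  the colour of that edge, each of these cycles is rainbow with probability at least
  (2k - 1)^-(2k - 2), independently, so the expected number of k-sets on no rainbow cycle is at
  most (n choose k) (2k - 1) (1 - (2k - 1)^-(2k - 2))^(n/(k - 1)), which tends to 0.  The
  probabilistic argument is carried out by counting colourings.
*)

section \<open>Lower bounds\<close>

lemma mod_Suc_neq_self: "2 \<le> L \<Longrightarrow> i < L \<Longrightarrow> (i + 1) mod L \<noteq> (i :: nat)"
  by (cases "i + 1 = L") auto

lemma inj_on_mod_Suc: "inj_on (\<lambda>i. (i + 1) mod L) {..<L :: nat}"
proof (rule inj_onI)
  fix a b assume "a \<in> {..<L}" "b \<in> {..<L}" "(a + 1) mod L = (b + 1) mod L"
  then show "a = b"
    by (cases "a + 1 = L"; cases "b + 1 = L") auto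
qed

lemma rainbow_cycle_adjacent:
  assumes "rainbow_cycle n c vs" "i < length vs"
  shows "vs ! i \<noteq> vs ! ((i + 1) mod length vs)" "vs ! i < n" "vs ! ((i + 1) mod length vs) < n"
proof -
  have L: "2 \<le> length vs" "distinct vs" "set vs \<subseteq> {..<n}"
    using assms(1) by (auto simp: rainbow_cycle_def)
  then have "(i + 1) mod length vs < length vs"
    by (intro mod_less_divisor) linarith
  with L assms(2) mod_Suc_neq_self[of "length vs" i]
  show "vs ! i \<noteq> vs ! ((i + 1) mod length vs)"
    by (simp add: nth_eq_iff_index_eq)
  show "vs ! i < n" "vs ! ((i + 1) mod length vs) < n"
    using L assms(2) \<open>(i + 1) mod length vs < length vs\<close> nth_mem by fastforce+
qed

lemma rainbow_cycle_length_le: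
  assumes "edge_colouring n m c" "rainbow_cycle n c vs"
  shows "length vs \<le> m"
proof -
  let ?col = "\<lambda>i. c (vs ! i) (vs ! ((i + 1) mod length vs))"
  have "?col ` {..<length vs} \<subseteq> {..<m}"
    using assms rainbow_cycle_adjacent[OF assms(2)] by (auto simp: edge_colouring_def)
  moreover have "inj_on ?col {..<length vs}"
    using assms(2) by (simp add: rainbow_cycle_def)
  ultimately show ?thesis
    using card_inj_on_le[of ?col "{..<length vs}" "{..<m}"] by simp
qed

lemma rainbow_cycle_through_monochromatic_set:
  assumes rc: "rainbow_cycle n c vs" and H: "H \<subseteq> set vs" "card H = k"
    and mono: "\<forall>u\<in>H. \<forall>v\<in>H. u \<noteq> v \<longrightarrow> c u v = i"
  shows "2 * k - 1 \<le> length vs"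
proof -
  let ?L = "length vs" and ?succ = "\<lambda>j. (j + 1) mod length vs"
  define P where "P = {j. j < ?L \<and> vs ! j \<in> H}"
  define Q where "Q = {j \<in> P. ?succ j \<in> P}"
  have dist: "distinct vs" and L: "2 \<le> ?L"
    and inj: "inj_on (\<lambda>j. c (vs ! j) (vs ! ?succ j)) {..<?L}"
    using rc by (auto simp: rainbow_cycle_def)
  have P: "P \<subseteq> {..<?L}" "finite P" and QP: "Q \<subseteq> P"
    by (auto simp: P_def Q_def)
  have "(!) vs ` P = H"
    using H(1) by (auto simp: P_def image_iff in_set_conv_nth subset_iff)
  moreover have "inj_on ((!) vs) P"
    using dist by (auto simp: inj_on_def P_def nth_eq_iff_index_eq)
  ultimately have "bij_betw ((!) vs) P H"
    by (simp add: bij_betw_def)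
  then have cP: "card P = k"
    using H(2) bij_betw_same_card by blast
  \<comment> \<open>consecutive vertices of H on the cycle are joined by edges of colour i,
      so rainbowness allows at most one such pair\<close>
  have "card Q \<le> 1"
  proof -
    have "c (vs ! j) (vs ! ?succ j) = i" if "j \<in> Q" for j
      using that mono rainbow_cycle_adjacent(1)[OF rc] by (auto simp: Q_def P_def)
    then have "\<forall>a\<in>Q. \<forall>b\<in>Q. a = b"
      using inj_onD[OF inj] P QP by (metis lessThan_iff subsetD)
    then show ?thesis
      using P QP finite_subset card_le_Suc0_iff_eq by (metis One_nat_def)
  qed
  then have "k - 1 \<le> card (P - Q)"
    using card_Diff_subset[OF finite_subset[OF QP P(2)] QP] cP by linarith
  also have "card (P - Q) \<le> card ({..<?L} - P)"
  proof (rule card_inj_on_le)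
    show "inj_on ?succ (P - Q)"
      using inj_on_mod_Suc P by (blast intro: inj_on_subset)
    have "?succ j < ?L" for j
      using L by (intro mod_less_divisor) linarith
    then show "?succ ` (P - Q) \<subseteq> {..<?L} - P"
      by (auto simp: Q_def)
  qed simp
  also have "\<dots> = ?L - k"
    using card_Diff_subset[OF P(2,1)] cP by simp
  finally have "k - 1 \<le> ?L - k" .
  moreover have "k \<le> ?L"
    using card_mono[OF _ P(1)] cP by simp
  ultimately show ?thesis by linarith
qed

lemma monochromatic_set_of_partn_lst:
  assumes c: "edge_colouring n m c" and R: "partn_lst {..<n} (replicate r k) 2" and "m \<le> r"
  obtains H i where "H \<subseteq> {..<n}" "card H = k" "\<forall>u\<in>H. \<forall>v\<in>H. u \<noteq> v \<longrightarrow> c u v = i"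
proof -
  define f where "f X = c (Min X) (Max X)" for X :: "nat set"
  have f_edge: "f {u, v} = c u v" if "u < n" "v < n" "u \<noteq> v" for u v
  proof -
    have "c v u = c u v"
      using c that by (simp add: edge_colouring_def)
    then show ?thesis
      using that(3) by (cases "u < v") (simp_all add: f_def insert_commute min_def max_def)
  qed
  have "f \<in> nsets {..<n} 2 \<rightarrow> {..<length (replicate r k)}"
  proof
    fix X assume "X \<in> nsets {..<n} 2"
    then obtain u v where "X = {u, v}" "u \<in> {..<n}" "v \<in> {..<n}" "u \<noteq> v"
      by (rule nsets2_E)
    moreover have "c u v < m"
      using c \<open>u \<in> {..<n}\<close> \<open>v \<in> {..<n}\<close> \<open>u \<noteq> v\<close> by (simp add: edge_colouring_def)
    ultimately show "f X \<in> {..<length (replicate r k)}"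
      using \<open>m \<le> r\<close> f_edge \<open>u \<in> {..<n}\<close> \<open>v \<in> {..<n}\<close> by simp
  qed
  then obtain i H where "H \<in> nsets {..<n} k" and mono: "f ` nsets H 2 \<subseteq> {i}"
    using R by (fastforce simp: partn_lst_def monochromatic_def)
  then have H: "H \<subseteq> {..<n}" "card H = k"
    by (auto simp: nsets_def)
  have "\<forall>u\<in>H. \<forall>v\<in>H. u \<noteq> v \<longrightarrow> c u v = i"
  proof (intro ballI impI)
    fix u v assume uv: "u \<in> H" "v \<in> H" "u \<noteq> v"
    have "{u, v} \<in> nsets H 2"
      using uv by (simp add: nsets_def)
    then have "f {u, v} = i"
      using mono by blast
    moreover have "u < n" "v < n"
      using uv H(1) by auto
    ultimately show "c u v = i"
      using f_edge \<open>u \<noteq> v\<close> by simp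
  qed
  then show ?thesis
    by (rule that[OF H])
qed

lemma eventually_colours_ge:
  shows "eventually (\<lambda>n. \<forall>m c. edge_colouring n m c \<and> k_rainbow_cyclic n k c \<longrightarrow> 2 * k - 1 \<le> m)
           sequentially"
proof -
  obtain R :: nat where R: "partn_lst {..<R} (replicate (2 * k - 2) k) 2"
    using ramsey_full[of "replicate (2 * k - 2) k" 2] by blast
  have "2 * k - 1 \<le> m"
    if "R \<le> n" and c: "edge_colouring n m c" "k_rainbow_cyclic n k c" for n m c
  proof (rule ccontr)
    assume "\<not> 2 * k - 1 \<le> m"
    then have "m \<le> 2 * k - 2"
      by linarith
    then obtain H i where H: "H \<subseteq> {..<n}" "card H = k" "\<forall>u\<in>H. \<forall>v\<in>H. u \<noteq> v \<longrightarrow> c u v = i"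
      using monochromatic_set_of_partn_lst[OF c(1) partn_lst_greater_resource[OF R \<open>R \<le> n\<close>]]
      by blast
    then obtain vs where vs: "rainbow_cycle n c vs" "H \<subseteq> set vs"
      using c(2) by (auto simp: k_rainbow_cyclic_def)
    have "2 * k - 1 \<le> length vs"
      using rainbow_cycle_through_monochromatic_set[OF vs H(2,3)] .
    moreover have "length vs \<le> m"
      using rainbow_cycle_length_le[OF c(1) vs(1)] .
    ultimately show False
      using \<open>\<not> 2 * k - 1 \<le> m\<close> by linarith
  qed
  then show ?thesis
    unfolding eventually_sequentially by blast
qed

lemma crx_eqI:
  assumes "edge_colouring n m c" "k_rainbow_cyclic n k c"
    and "\<And>m' c'. edge_colouring n m' c' \<Longrightarrow> k_rainbow_cyclic n k c' \<Longrightarrow> m \<le> m'"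
  shows "crx k n = m"
  unfolding crx_def using assms by (intro Least_equality) auto

lemma three_le_colours:
  assumes "edge_colouring n m c" "k_rainbow_cyclic n k c" "k \<le> n"
  shows "3 \<le> m"
proof -
  obtain vs where "rainbow_cycle n c vs"
    using assms(2,3) by (auto simp: k_rainbow_cyclic_def dest: spec[of _ "{..<k}"])
  then show ?thesis
    using rainbow_cycle_length_le[OF assms(1)] by (fastforce simp: rainbow_cycle_def)
qed

section \<open>Three colours for k \<le> 2\<close>

definition mod3_colouring :: "nat \<Rightarrow> nat \<Rightarrow> nat" where
  "mod3_colouring u v = (let a = min u v; b = max u v in
     if a mod 3 = 0 then b mod 3 else if b mod 3 = 0 then 3 - a mod 3 else 0)"

lemma edge_colouring_mod3_colouring: "edge_colouring n 3 mod3_colouring"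
  unfolding edge_colouring_def mod3_colouring_def Let_def by (auto simp: min.commute max.commute)

lemma mod3_colouring_less:
  "a < b \<Longrightarrow> mod3_colouring a b =
     (if a mod 3 = 0 then b mod 3 else if b mod 3 = 0 then 3 - a mod 3 else 0)"
  unfolding mod3_colouring_def Let_def by (simp add: min_def max_def)

lemma mod3_colouring_greater:
  "b < a \<Longrightarrow> mod3_colouring a b =
     (if b mod 3 = 0 then a mod 3 else if a mod 3 = 0 then 3 - b mod 3 else 0)"
  unfolding mod3_colouring_def Let_def by (simp add: min_def max_def)

lemma rainbow_triangleI:
  assumes "a < n" "b < n" "d < n" "distinct [a, b, d]" "distinct [c a b, c b d, c d a]"
  shows "rainbow_cycle n c [a, b, d]"
proof -
  have "{..<length [a, b, d]} = {0, 1, 2}"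
    by auto
  then show ?thesis
    using assms by (simp add: rainbow_cycle_def inj_on_def)
qed

lemma mod3_colouring_rainbow_triangle:
  assumes "u < v" "v < n" "3 \<le> n"
  shows "\<exists>w<n. distinct [u, v, w] \<and>
           distinct [mod3_colouring u v, mod3_colouring v w, mod3_colouring w u]"
proof -
  have "u mod 3 = 0 \<or> u mod 3 = 1 \<or> u mod 3 = 2" "v mod 3 = 0 \<or> v mod 3 = 1 \<or> v mod 3 = 2"
    by presburger+
  then consider
      "u mod 3 = 0" "v mod 3 = 0" | "u mod 3 = 0" "v mod 3 = 1" | "u mod 3 = 0" "v mod 3 = 2"
    | "u mod 3 = 1" "v mod 3 = 0" | "u mod 3 = 1" "v mod 3 = 1" | "u mod 3 = 1" "v mod 3 = 2"
    | "u mod 3 = 2" "v mod 3 = 0" | "u mod 3 = 2" "v mod 3 = 1" | "u mod 3 = 2" "v mod 3 = 2"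
    by (elim disjE) simp_all
  then show ?thesis
  proof cases
    case 1
    then have "u + 1 < v" "(u + 1) mod 3 = 1"
      using assms by presburger+
    then show ?thesis
      using 1 assms by (intro exI[of _ "u + 1"]) (simp add: mod3_colouring_less mod3_colouring_greater)
  next
    case 2
    show ?thesis
    proof (cases "u = 0")
      case True
      then have "v = 1 \<or> 2 < v"
        using 2 assms by presburger
      then show ?thesis
        using 2 assms True
        by (intro exI[of _ 2]) (auto simp: mod3_colouring_less mod3_colouring_greater)
    next
      case False
      then have "3 \<le> u"
        using 2 by presburger
      then show ?thesis
        using 2 assms by (intro exI[of _ 1]) (simp add: mod3_colouring_less mod3_colouring_greater)
    qed
  next
    case 3
    then have "u + 1 < v" "(u + 1) mod 3 = 1"
      using assms by presburger+
    then show ?thesis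
      using 3 assms by (intro exI[of _ "u + 1"]) (simp add: mod3_colouring_less mod3_colouring_greater)
  next
    case 5
    then have "u + 2 < v" "(u + 2) mod 3 = 0"
      using assms by presburger+
    then show ?thesis
      using 5 assms by (intro exI[of _ "u + 2"]) (simp add: mod3_colouring_less mod3_colouring_greater)
  next
    case 9
    then have "u + 1 < v" "(u + 1) mod 3 = 0"
      using assms by presburger+
    then show ?thesis
      using 9 assms by (intro exI[of _ "u + 1"]) (simp add: mod3_colouring_less mod3_colouring_greater)
  \<comment> \<open>in the remaining cases 4, 6, 7 and 8 the vertex 0 completes a rainbow triangle\<close>
  qed (use assms in \<open>(intro exI[of _ 0], simp add: mod3_colouring_less mod3_colouring_greater)\<close>)+
qed

lemma k_rainbow_cyclic_2_mod3_colouring: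
  assumes "3 \<le> n"
  shows "k_rainbow_cyclic n 2 mod3_colouring"
  unfolding k_rainbow_cyclic_def
proof (intro allI impI)
  fix S assume S: "S \<subseteq> {..<n} \<and> card S = 2"
  then obtain u v where uv: "S = {u, v}" "u < v" "v < n"
    by (auto simp: card_2_iff) (metis insert_commute linorder_neqE_nat)
  then obtain w where "w < n" "distinct [u, v, w]"
    "distinct [mod3_colouring u v, mod3_colouring v w, mod3_colouring w u]"
    using mod3_colouring_rainbow_triangle assms by blast
  then have "rainbow_cycle n mod3_colouring [u, v, w]"
    using uv by (intro rainbow_triangleI) auto
  then show "\<exists>vs. rainbow_cycle n mod3_colouring vs \<and> S \<subseteq> set vs"
    using uv(1) by auto
qed

lemma k_rainbow_cyclic_1_if_2:
  assumes "2 \<le> n" "k_rainbow_cyclic n 2 c"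
  shows "k_rainbow_cyclic n 1 c"
  unfolding k_rainbow_cyclic_def
proof (intro allI impI)
  fix S assume "S \<subseteq> {..<n} \<and> card S = 1"
  then obtain a where a: "S = {a}" "a < n"
    by (auto simp: card_1_singleton_iff)
  define b :: nat where "b = (if a = 0 then 1 else 0)"
  have "{a, b} \<subseteq> {..<n} \<and> card {a, b} = 2"
    using a assms(1) by (auto simp: b_def)
  then obtain vs where "rainbow_cycle n c vs" "{a, b} \<subseteq> set vs"
    using assms(2) unfolding k_rainbow_cyclic_def by blast
  then show "\<exists>vs. rainbow_cycle n c vs \<and> S \<subseteq> set vs"
    using a by auto
qed

lemma crx_1_and_2:
  assumes "3 \<le> n"
  shows "crx 1 n = 3" "crx 2 n = 3"
proof -
  have 2: "k_rainbow_cyclic n 2 mod3_colouring"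
    using k_rainbow_cyclic_2_mod3_colouring[OF assms] .
  have 1: "k_rainbow_cyclic n 1 mod3_colouring"
    using k_rainbow_cyclic_1_if_2[OF _ 2] assms by simp
  show "crx 1 n = 3"
    using crx_eqI[OF edge_colouring_mod3_colouring 1] three_le_colours assms by simp
  show "crx 2 n = 3"
    using crx_eqI[OF edge_colouring_mod3_colouring 2] three_le_colours assms by simp
qed

section \<open>Random colourings for k \<ge> 3\<close>

definition cycle_edge :: "nat list \<Rightarrow> nat \<Rightarrow> nat set" where
  "cycle_edge vs i = {vs ! i, vs ! ((i + 1) mod length vs)}"

lemma edge_colouring_pair_colouring:
  assumes "f \<in> nsets {..<n} 2 \<rightarrow>\<^sub>E {..<m}"
  shows "edge_colouring n m (\<lambda>u v. f {u, v})"
proof -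
  have "f {u, v} < m" if "u < n" "v < n" "u \<noteq> v" for u v
  proof -
    have "{u, v} \<in> nsets {..<n} 2"
      using that by (simp add: nsets_def card_insert_if)
    then show ?thesis
      using PiE_mem[OF assms] by blast
  qed
  then show ?thesis
    by (simp add: edge_colouring_def insert_commute)
qed

lemma mod_Suc_Suc_neq_self: "3 \<le> L \<Longrightarrow> i < L \<Longrightarrow> ((i + 1) mod L + 1) mod L \<noteq> (i :: nat)"
  by (cases "i + 2 < L"; cases "i + 1 = L") (auto simp: mod_Suc_eq mod_if)

lemma cycle_edge_in_nsets:
  assumes "distinct vs" "2 \<le> length vs" "set vs \<subseteq> {..<n}" "i < length vs"
  shows "cycle_edge vs i \<in> nsets {..<n} 2"
proof -
  have "(i + 1) mod length vs < length vs"
    using assms(2) by (intro mod_less_divisor) linarith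
  then have "vs ! i \<noteq> vs ! ((i + 1) mod length vs)" "vs ! i < n" "vs ! ((i + 1) mod length vs) < n"
    using assms mod_Suc_neq_self[of "length vs" i] nth_mem
    by (auto simp: nth_eq_iff_index_eq)
  then show ?thesis
    by (simp add: cycle_edge_def nsets_def card_insert_if)
qed

lemma inj_on_cycle_edge:
  assumes "distinct vs" "3 \<le> length vs"
  shows "inj_on (cycle_edge vs) {..<length vs}"
proof (rule inj_onI)
  fix i j assume ij: "i \<in> {..<length vs}" "j \<in> {..<length vs}" "cycle_edge vs i = cycle_edge vs j"
  let ?succ = "\<lambda>i. (i + 1) mod length vs"
  have succ: "?succ i < length vs" "?succ j < length vs"
    using assms(2) by (intro mod_less_divisor; linarith)+
  consider "i = j" | "i = ?succ j" "?succ i = j"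
    using ij succ assms(1) by (auto simp: cycle_edge_def doubleton_eq_iff nth_eq_iff_index_eq)
  then show "i = j"
    using mod_Suc_Suc_neq_self[OF assms(2), of j] ij(2) by cases auto
qed

lemma rainbow_cycle_pair_colouring_iff:
  "rainbow_cycle n (\<lambda>u v. f {u, v}) vs \<longleftrightarrow>
     3 \<le> length vs \<and> distinct vs \<and> set vs \<subseteq> {..<n} \<and> inj_on (f \<circ> cycle_edge vs) {..<length vs}"
  by (simp add: rainbow_cycle_def cycle_edge_def comp_def)

lemma card_PiE_restrict_le:
  assumes "finite E" "finite D" "A \<subseteq> E"
  shows "card {f \<in> E \<rightarrow>\<^sub>E D. P (restrict f (E - A)) \<and> Q (restrict f A)}
           \<le> card {g \<in> E - A \<rightarrow>\<^sub>E D. P g} * card {h \<in> A \<rightarrow>\<^sub>E D. Q h}"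
proof -
  let ?S = "{f \<in> E \<rightarrow>\<^sub>E D. P (restrict f (E - A)) \<and> Q (restrict f A)}"
  let ?X = "{g \<in> E - A \<rightarrow>\<^sub>E D. P g}" and ?Y = "{h \<in> A \<rightarrow>\<^sub>E D. Q h}"
  let ?split = "\<lambda>f. (restrict f (E - A), restrict f A)"
  have "inj_on ?split ?S"
  proof (rule inj_onI)
    fix f g assume "f \<in> ?S" "g \<in> ?S" "?split f = ?split g"
    then show "f = g"
      by (intro PiE_ext[of f E "\<lambda>_. D"]) (auto simp: fun_eq_iff restrict_def split: if_splits)
  qed
  moreover have "?split ` ?S \<subseteq> ?X \<times> ?Y"
  proof (rule image_subsetI)
    fix f assume f: "f \<in> ?S"
    have "restrict f (E - A) \<in> E - A \<rightarrow>\<^sub>E D" "restrict f A \<in> A \<rightarrow>\<^sub>E D"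
      unfolding restrict_PiE_iff using f assms(3) by auto
    then show "?split f \<in> ?X \<times> ?Y"
      using f by simp
  qed
  moreover have "finite (?X \<times> ?Y)"
    using assms by (simp add: finite_PiE finite_subset)
  ultimately have "card ?S \<le> card (?X \<times> ?Y)"
    by (rule card_inj_on_le)
  then show ?thesis
    by (simp add: card_cartesian_product)
qed

lemma card_PiE_blocks_le:
  fixes A :: "nat \<Rightarrow> 'e set" and D :: "'d set" and Q :: "nat \<Rightarrow> ('e \<Rightarrow> 'd) \<Rightarrow> bool"
  assumes "finite E" "finite D" "0 \<le> \<rho>"
    and "\<And>l. l < T \<Longrightarrow> A l \<subseteq> E"
    and "\<And>l l'. l < T \<Longrightarrow> l' < T \<Longrightarrow> l \<noteq> l' \<Longrightarrow> A l \<inter> A l' = {}"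
    and "\<And>l. l < T \<Longrightarrow> real (card {h \<in> A l \<rightarrow>\<^sub>E D. Q l h}) \<le> \<rho> * real (card D) ^ card (A l)"
  shows "real (card {f \<in> E \<rightarrow>\<^sub>E D. \<forall>l<T. Q l (restrict f (A l))}) \<le> \<rho> ^ T * real (card D) ^ card E"
  using assms(1,4-6)
proof (induction T arbitrary: E)
  case 0
  then show ?case
    by (simp add: card_PiE)
next
  case (Suc T)
  define E' where "E' = E - A T"
  let ?P = "\<lambda>g. \<forall>l<T. Q l (restrict g (A l))"
  have AT: "A T \<subseteq> E"
    using Suc.prems(2) by simp
  then have fin: "finite (A T)" "finite E'"
    using Suc.prems(1) finite_subset by (auto simp: E'_def)
  have AE': "A l \<subseteq> E'" if "l < T" for l
    using Suc.prems(2,3)[of l] that by (auto simp: E'_def)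
  then have "E' \<inter> A l = A l" if "l < T" for l
    using that by blast
  then have "{f \<in> E \<rightarrow>\<^sub>E D. \<forall>l<Suc T. Q l (restrict f (A l))}
      = {f \<in> E \<rightarrow>\<^sub>E D. ?P (restrict f E') \<and> Q T (restrict f (A T))}"
    by (auto simp: less_Suc_eq)
  then have "card {f \<in> E \<rightarrow>\<^sub>E D. \<forall>l<Suc T. Q l (restrict f (A l))}
      \<le> card {g \<in> E' \<rightarrow>\<^sub>E D. ?P g} * card {h \<in> A T \<rightarrow>\<^sub>E D. Q T h}"
    using card_PiE_restrict_le[OF Suc.prems(1) assms(2) AT, of ?P "Q T"] by (simp add: E'_def)
  then have "real (card {f \<in> E \<rightarrow>\<^sub>E D. \<forall>l<Suc T. Q l (restrict f (A l))})
      \<le> real (card {g \<in> E' \<rightarrow>\<^sub>E D. ?P g}) * real (card {h \<in> A T \<rightarrow>\<^sub>E D. Q T h})"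
    by (simp only: of_nat_mult[symmetric] of_nat_le_iff)
  also have "\<dots> \<le> (\<rho> ^ T * real (card D) ^ card E') * (\<rho> * real (card D) ^ card (A T))"
  proof (rule mult_mono)
    show "real (card {g \<in> E' \<rightarrow>\<^sub>E D. ?P g}) \<le> \<rho> ^ T * real (card D) ^ card E'"
      by (rule Suc.IH[OF fin(2) AE']) (use Suc.prems(3,4) in auto)
    show "real (card {h \<in> A T \<rightarrow>\<^sub>E D. Q T h}) \<le> \<rho> * real (card D) ^ card (A T)"
      using Suc.prems(4) by simp
  qed (use assms(3) in auto)
  also have "\<dots> = \<rho> ^ Suc T * real (card D) ^ (card E' + card (A T))"
    by (simp add: power_add)
  also have "card E' + card (A T) = card E"
    using card_Diff_subset[OF fin(1) AT] card_mono[OF Suc.prems(1) AT] by (simp add: E'_def)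
  finally show ?case .
qed

lemma exists_injective_extension_avoiding:
  assumes "inj_on g {..<a}" "finite D" "a < card D"
  shows "\<exists>h \<in> g ` {..<a} \<rightarrow>\<^sub>E D. inj_on (h \<circ> g) {..<a} \<and> \<alpha> \<notin> (h \<circ> g) ` {..<a}"
proof -
  have "card {..<a} \<le> card (D - {\<alpha>})"
    using assms(2,3) by (auto simp: card_Diff_singleton_if)
  then obtain \<phi> where \<phi>: "\<phi> ` {..<a} \<subseteq> D - {\<alpha>}" "inj_on \<phi> {..<a}"
    using card_le_inj[of "{..<a}" "D - {\<alpha>}"] assms(2) by auto
  define h where "h = restrict (\<phi> \<circ> the_inv_into {..<a} g) (g ` {..<a})"
  have hg: "(h \<circ> g) i = \<phi> i" if "i < a" for i
    using assms(1) that by (simp add: h_def the_inv_into_f_f)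
  have "h \<in> g ` {..<a} \<rightarrow>\<^sub>E D"
    using \<phi>(1) assms(1) by (auto simp: h_def the_inv_into_f_f)
  moreover have "inj_on (h \<circ> g) {..<a}"
    using \<phi>(2) hg by (simp add: inj_on_def)
  moreover have "\<alpha> \<notin> (h \<circ> g) ` {..<a}"
    using \<phi>(1) hg by auto
  ultimately show ?thesis
    by blast
qed

lemma card_PiE_not_injective_or_hitting_le:
  assumes g: "inj_on g {..<a}" and "a < m"
  shows "real (card {h \<in> g ` {..<a} \<rightarrow>\<^sub>E {..<m}. \<not> (inj_on (h \<circ> g) {..<a} \<and> \<alpha> \<notin> (h \<circ> g) ` {..<a})})
           \<le> (1 - 1 / real m ^ a) * real (card {..<m}) ^ card (g ` {..<a})"
proof -
  let ?P = "g ` {..<a} \<rightarrow>\<^sub>E {..<m}"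
  obtain h0 where h0: "h0 \<in> ?P" "inj_on (h0 \<circ> g) {..<a}" "\<alpha> \<notin> (h0 \<circ> g) ` {..<a}"
    using exists_injective_extension_avoiding[OF g, of "{..<m}" \<alpha>] \<open>a < m\<close> by auto
  have cA: "card (g ` {..<a}) = a"
    using card_image[OF g] by simp
  have "card {h \<in> ?P. \<not> (inj_on (h \<circ> g) {..<a} \<and> \<alpha> \<notin> (h \<circ> g) ` {..<a})} \<le> card (?P - {h0})"
    using h0(2,3) by (intro card_mono) (auto simp: finite_PiE)
  also have "\<dots> = m ^ a - 1"
    using h0(1) cA by (simp add: card_PiE)
  finally have "real (card {h \<in> ?P. \<not> (inj_on (h \<circ> g) {..<a} \<and> \<alpha> \<notin> (h \<circ> g) ` {..<a})})
      \<le> real (m ^ a - 1)"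
    by (simp only: of_nat_le_iff)
  also have "\<dots> = real m ^ a - 1"
    using \<open>a < m\<close> by (simp add: of_nat_diff Suc_le_eq)
  also have "\<dots> = (1 - 1 / real m ^ a) * real (card {..<m}) ^ card (g ` {..<a})"
    using \<open>a < m\<close> cA by (simp add: field_simps)
  finally show ?thesis .
qed

lemma card_colourings_without_rainbow_cycle_le:
  fixes cyc :: "nat \<Rightarrow> nat list"
  assumes cyc: "\<And>l. l < T \<Longrightarrow> length (cyc l) = Suc a \<and> distinct (cyc l) \<and> set (cyc l) \<subseteq> {..<n}
                             \<and> cycle_edge (cyc l) a = e"
    and disj: "\<And>l l' i j. l < T \<Longrightarrow> l' < T \<Longrightarrow> i < a \<Longrightarrow> j < a \<Longrightarrow>
                 cycle_edge (cyc l) i = cycle_edge (cyc l') j \<Longrightarrow> l = l'"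
    and e: "e \<in> nsets {..<n} 2" and a: "2 \<le> a" "a < m"
  shows "real (card {f \<in> nsets {..<n} 2 \<rightarrow>\<^sub>E {..<m}. \<forall>l<T. \<not> rainbow_cycle n (\<lambda>u v. f {u, v}) (cyc l)})
           \<le> real m * (1 - 1 / real m ^ a) ^ T * real m ^ card (nsets {..<n} 2)"
proof -
  let ?E = "nsets {..<n} 2" and ?D = "{..<m}" and ?\<rho> = "1 - 1 / real m ^ a"
  define A where "A l = cycle_edge (cyc l) ` {..<a}" for l
  define good where "good \<alpha> l h \<longleftrightarrow>
    inj_on (h \<circ> cycle_edge (cyc l)) {..<a} \<and> \<alpha> \<notin> (h \<circ> cycle_edge (cyc l)) ` {..<a}"
    for \<alpha> l and h :: "nat set \<Rightarrow> nat"
  have inj: "inj_on (cycle_edge (cyc l)) {..<a}" if "l < T" for l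
    using inj_on_cycle_edge[of "cyc l"] cyc[OF that] a by (auto intro: inj_on_subset)
  have rainbow_iff: "rainbow_cycle n (\<lambda>u v. f {u, v}) (cyc l) \<longleftrightarrow> good (f e) l (restrict f (A l))"
    if "l < T" for f l
  proof -
    have "{..<length (cyc l)} = insert a {..<a}"
      using cyc[OF that] by auto
    moreover have "(restrict f (A l) \<circ> cycle_edge (cyc l)) ` {..<a} = (f \<circ> cycle_edge (cyc l)) ` {..<a}"
      "inj_on (restrict f (A l) \<circ> cycle_edge (cyc l)) {..<a} \<longleftrightarrow> inj_on (f \<circ> cycle_edge (cyc l)) {..<a}"
      by (auto simp: A_def inj_on_def)
    ultimately show ?thesis
      using cyc[OF that] a by (simp add: rainbow_cycle_pair_colouring_iff good_def)
  qed
  have "real (card {h \<in> A l \<rightarrow>\<^sub>E ?D. \<not> good \<alpha> l h}) \<le> ?\<rho> * real (card ?D) ^ card (A l)"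
    if "l < T" for \<alpha> l
    using card_PiE_not_injective_or_hitting_le[OF inj[OF that] a(2), of \<alpha>] by (simp add: A_def good_def)
  then have bad_count: "real (card {f \<in> ?E \<rightarrow>\<^sub>E ?D. \<forall>l<T. \<not> good \<alpha> l (restrict f (A l))})
      \<le> ?\<rho> ^ T * real m ^ card ?E" for \<alpha>
  proof (intro card_PiE_blocks_le[where D = ?D, simplified])
    show "A l \<subseteq> ?E" if "l < T" for l
      using cycle_edge_in_nsets cyc[OF that] a by (auto simp: A_def)
    show "A l \<inter> A l' = {}" if "l < T" "l' < T" "l \<noteq> l'" for l l'
      using disj that by (fastforce simp: A_def)
    show "0 \<le> ?\<rho>"
      using a by simp
  qed (simp_all add: finite_imp_finite_nsets)
  \<comment> \<open>once the colour \<alpha> of the common edge e is fixed, the events concern disjoint sets of edges\<close>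
  let ?bad = "\<lambda>\<alpha>. {f \<in> ?E \<rightarrow>\<^sub>E ?D. \<forall>l<T. \<not> good \<alpha> l (restrict f (A l))}"
  have "{f \<in> ?E \<rightarrow>\<^sub>E ?D. \<forall>l<T. \<not> rainbow_cycle n (\<lambda>u v. f {u, v}) (cyc l)} \<subseteq> (\<Union>\<alpha>\<in>?D. ?bad \<alpha>)"
    using rainbow_iff e by blast
  moreover have "finite (\<Union>\<alpha>\<in>?D. ?bad \<alpha>)"
    by (rule finite_subset[of _ "?E \<rightarrow>\<^sub>E ?D"]) (auto simp: finite_PiE finite_imp_finite_nsets)
  ultimately have "card {f \<in> ?E \<rightarrow>\<^sub>E ?D. \<forall>l<T. \<not> rainbow_cycle n (\<lambda>u v. f {u, v}) (cyc l)}
        \<le> card (\<Union>\<alpha>\<in>?D. ?bad \<alpha>)"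
    by (rule card_mono[rotated])
  also have "\<dots> \<le> (\<Sum>\<alpha>\<in>?D. card (?bad \<alpha>))"
    by (rule card_UN_le) simp
  finally have "real (card {f \<in> ?E \<rightarrow>\<^sub>E ?D. \<forall>l<T. \<not> rainbow_cycle n (\<lambda>u v. f {u, v}) (cyc l)})
        \<le> (\<Sum>\<alpha>\<in>?D. real (card (?bad \<alpha>)))"
    by (simp only: of_nat_sum[symmetric] of_nat_le_iff)
  also have "\<dots> \<le> (\<Sum>\<alpha>\<in>?D. ?\<rho> ^ T * real m ^ card ?E)"
    by (rule sum_mono) (rule bad_count)
  finally show ?thesis
    by (simp add: mult.assoc)
qed

definition interleave :: "'a list \<Rightarrow> 'a list \<Rightarrow> 'a list" where
  "interleave ss xs = map (\<lambda>j. if even j then ss ! (j div 2) else xs ! (j div 2)) [0..<2 * length ss - 1]"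

lemma length_interleave [simp]: "length (interleave ss xs) = 2 * length ss - 1"
  by (simp add: interleave_def)

lemma nth_interleave:
  "j < 2 * length ss - 1 \<Longrightarrow> interleave ss xs ! j = (if even j then ss ! (j div 2) else xs ! (j div 2))"
  by (simp add: interleave_def)

lemma set_interleave:
  assumes "length ss - 1 \<le> length xs"
  shows "set (interleave ss xs) = set ss \<union> set (take (length ss - 1) xs)"
proof (intro equalityI subsetI)
  fix x assume "x \<in> set (interleave ss xs)"
  then obtain j where j: "j < 2 * length ss - 1" "x = interleave ss xs ! j"
    by (auto simp: in_set_conv_nth)
  then have "j div 2 < length ss" "odd j \<Longrightarrow> j div 2 < length ss - 1"
    by (auto elim!: oddE)
  then show "x \<in> set ss \<union> set (take (length ss - 1) xs)"
    using j assms by (auto simp: nth_interleave in_set_conv_nth)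
next
  fix x assume "x \<in> set ss \<union> set (take (length ss - 1) xs)"
  then consider i where "i < length ss" "x = ss ! i" | i where "i < length ss - 1" "x = xs ! i"
    using assms by (auto simp: in_set_conv_nth)
  then show "x \<in> set (interleave ss xs)"
  proof cases
    case (1 i)
    then have "2 * i < length (interleave ss xs)" "x = interleave ss xs ! (2 * i)"
      by (auto simp: nth_interleave)
    then show ?thesis
      by (metis nth_mem)
  next
    case (2 i)
    then have "2 * i + 1 < length (interleave ss xs)" "x = interleave ss xs ! (2 * i + 1)"
      by (auto simp: nth_interleave)
    then show ?thesis
      by (metis nth_mem)
  qed
qed

lemma distinct_interleave:
  assumes "distinct ss" "distinct (take (length ss - 1) xs)"
    and "set ss \<inter> set (take (length ss - 1) xs) = {}" "length ss - 1 \<le> length xs"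
  shows "distinct (interleave ss xs)"
proof -
  let ?ys = "take (length ss - 1) xs"
  have half: "j div 2 < length ss" "odd j \<Longrightarrow> j div 2 < length ss - 1"
    if "j < 2 * length ss - 1" for j
    using that by (auto elim!: oddE)
  have nth: "interleave ss xs ! j = (if even j then ss ! (j div 2) else ?ys ! (j div 2))"
    if "j < 2 * length ss - 1" for j
    using that half[OF that] by (simp add: nth_interleave)
  have mem: "even j \<Longrightarrow> interleave ss xs ! j \<in> set ss" "odd j \<Longrightarrow> interleave ss xs ! j \<in> set ?ys"
    if "j < 2 * length ss - 1" for j
  proof -
    show "even j \<Longrightarrow> interleave ss xs ! j \<in> set ss"
      using nth[OF that] half[OF that] by simp
    assume "odd j"
    then have "?ys ! (j div 2) \<in> set ?ys"
      using half[OF that] assms(4) by (intro nth_mem) simp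
    then show "interleave ss xs ! j \<in> set ?ys"
      using nth[OF that] \<open>odd j\<close> by simp
  qed
  have "interleave ss xs ! i \<noteq> interleave ss xs ! j"
    if "i < 2 * length ss - 1" "j < 2 * length ss - 1" "i \<noteq> j" for i j
  proof (cases "even i = even j")
    case True
    then have "i div 2 \<noteq> j div 2"
      using that(3) by (metis div_mult_mod_eq even_iff_mod_2_eq_zero odd_iff_mod_2_eq_one)
    moreover have "a = b" if "xs ! a = xs ! b" "a < length ss - 1" "b < length ss - 1" for a b
      using assms(2,4) that nth_eq_iff_index_eq[of ?ys a b] by auto
    ultimately show ?thesis
      using True that half[OF that(1)] half[OF that(2)] assms(1)
      by (auto simp: nth nth_eq_iff_index_eq)
  next
    case False
    then show ?thesis
      using mem[OF that(1)] mem[OF that(2)] assms(3) by auto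
  qed
  then show ?thesis
    by (auto simp: distinct_conv_nth)
qed

lemma cycle_edge_interleave:
  "i < 2 * length ss - 2 \<Longrightarrow> cycle_edge (interleave ss xs) i = {ss ! ((i + 1) div 2), xs ! (i div 2)}"
  by (auto simp: cycle_edge_def nth_interleave)

lemma cycle_edge_interleave_last:
  assumes "ss \<noteq> []"
  shows "cycle_edge (interleave ss xs) (2 * length ss - 2) = {ss ! 0, ss ! (length ss - 1)}"
proof -
  have "0 < length ss"
    using assms by simp
  then have "2 * length ss - 2 = 2 * (length ss - 1)" "2 * length ss - 2 + 1 = 2 * length ss - 1"
    by linarith+
  then show ?thesis
    using assms by (simp add: cycle_edge_def nth_interleave insert_commute)
qed

lemma cycle_edge_interleave_blocks_eqD:
  fixes ss xs :: "nat list"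
  assumes xs: "distinct xs" "set ss \<inter> set xs = {}"
    and room: "Suc l * (length ss - 1) \<le> length xs" "Suc l' * (length ss - 1) \<le> length xs"
    and ij: "i < 2 * length ss - 2" "j < 2 * length ss - 2"
    and same_edge: "cycle_edge (interleave ss (drop (l * (length ss - 1)) xs)) i
                    = cycle_edge (interleave ss (drop (l' * (length ss - 1)) xs)) j"
  shows "l = l'"
proof -
  let ?d = "length ss - 1"
  have pos: "l * ?d + i div 2 < length xs" "l' * ?d + j div 2 < length xs" "i div 2 < ?d" "j div 2 < ?d"
    using room ij by auto
  have "xs ! (l * ?d + i div 2) \<notin> set ss" "xs ! (l' * ?d + j div 2) \<notin> set ss"
    using xs(2) nth_mem[OF pos(1)] nth_mem[OF pos(2)] by auto
  moreover have "(i + 1) div 2 < length ss" "(j + 1) div 2 < length ss"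
    using ij by auto
  then have "ss ! ((i + 1) div 2) \<in> set ss" "ss ! ((j + 1) div 2) \<in> set ss"
    by simp_all
  moreover have "cycle_edge (interleave ss (drop (l * ?d) xs)) i = {ss ! ((i + 1) div 2), xs ! (l * ?d + i div 2)}"
    "cycle_edge (interleave ss (drop (l' * ?d) xs)) j = {ss ! ((j + 1) div 2), xs ! (l' * ?d + j div 2)}"
    using ij pos(1,2) by (simp_all add: cycle_edge_interleave nth_drop)
  ultimately have "xs ! (l * ?d + i div 2) = xs ! (l' * ?d + j div 2)"
    using same_edge by (auto simp: doubleton_eq_iff)
  then have "l * ?d + i div 2 = l' * ?d + j div 2"
    using pos xs(1) by (simp add: nth_eq_iff_index_eq)
  then have "(l * ?d + i div 2) div ?d = (l' * ?d + j div 2) div ?d"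
    by simp
  then show ?thesis
    using pos(3,4) by simp
qed

lemma cycle_packing:
  assumes k: "2 \<le> k" and S: "S \<subseteq> {..<n}" "card S = k"
  obtains e cyc where "e \<in> nsets {..<n} 2"
    and "\<And>l. l < (n - k) div (k - 1) \<Longrightarrow>
           length (cyc l) = Suc (2 * k - 2) \<and> distinct (cyc l) \<and> set (cyc l) \<subseteq> {..<n}
           \<and> cycle_edge (cyc l) (2 * k - 2) = e \<and> S \<subseteq> set (cyc l)"
    and "\<And>l l' i j. l < (n - k) div (k - 1) \<Longrightarrow> l' < (n - k) div (k - 1) \<Longrightarrow>
           i < 2 * k - 2 \<Longrightarrow> j < 2 * k - 2 \<Longrightarrow> cycle_edge (cyc l) i = cycle_edge (cyc l') j \<Longrightarrow> l = l'"
proof -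
  define T where "T = (n - k) div (k - 1)"
  define ss where "ss = sorted_list_of_set S"
  define xs where "xs = sorted_list_of_set ({..<n} - S)"
  define cyc where "cyc l = interleave ss (drop (l * (k - 1)) xs)" for l
  define e where "e = {ss ! 0, ss ! (k - 1)}"
  have "finite S"
    using S(1) finite_subset by blast
  then have ss: "distinct ss" "set ss = S" "length ss = k"
    using S(2) by (simp_all add: ss_def)
  then have "ss \<noteq> []"
    using k by auto
  have xs: "distinct xs" "set xs = {..<n} - S" "length xs = n - k"
    using S by (simp_all add: xs_def card_Diff_subset \<open>finite S\<close>)
  have room: "Suc l * (k - 1) \<le> length xs" if "l < T" for l
  proof -
    have "Suc l * (k - 1) \<le> T * (k - 1)"
      using that by (intro mult_le_mono1) simp
    also have "\<dots> \<le> n - k"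
      unfolding T_def by (rule div_times_less_eq_dividend)
    finally show ?thesis
      using xs(3) by simp
  qed
  show ?thesis
  proof (rule that[of e cyc, folded T_def])
    have "0 < length ss" "k - 1 < length ss" "0 \<noteq> k - 1"
      using ss(3) k by auto
    then show "e \<in> nsets {..<n} 2"
      using ss S(1) nth_mem[of 0 ss] nth_mem[of "k - 1" ss]
      by (auto simp: e_def nsets_def card_insert_if nth_eq_iff_index_eq)
  next
    fix l assume "l < T"
    let ?ys = "take (k - 1) (drop (l * (k - 1)) xs)"
    have "set ?ys \<subseteq> set xs"
      by (meson order_trans set_drop_subset set_take_subset)
    then have ys: "distinct ?ys" "set ?ys \<subseteq> {..<n} - S" "k - 1 \<le> length (drop (l * (k - 1)) xs)"
      using xs(1,2) room[OF \<open>l < T\<close>] by auto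
    have "distinct (cyc l)"
      unfolding cyc_def using ss ys by (intro distinct_interleave) auto
    moreover have "set (cyc l) = S \<union> set ?ys"
      unfolding cyc_def using ss ys by (simp add: set_interleave)
    moreover have "cycle_edge (cyc l) (2 * k - 2) = e"
      using cycle_edge_interleave_last[OF \<open>ss \<noteq> []\<close>, of "drop (l * (k - 1)) xs"] ss(3)
      by (simp add: cyc_def e_def)
    moreover have "length (cyc l) = Suc (2 * k - 2)"
      using ss(3) k by (simp add: cyc_def)
    ultimately show "length (cyc l) = Suc (2 * k - 2) \<and> distinct (cyc l) \<and> set (cyc l) \<subseteq> {..<n}
        \<and> cycle_edge (cyc l) (2 * k - 2) = e \<and> S \<subseteq> set (cyc l)"
      using S(1) ys(2) by auto
  next
    fix l l' i j
    assume "l < T" "l' < T" "i < 2 * k - 2" "j < 2 * k - 2"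
      and "cycle_edge (cyc l) i = cycle_edge (cyc l') j"
    moreover have "set ss \<inter> set xs = {}"
      using ss(2) xs(2) by auto
    ultimately show "l = l'"
      using cycle_edge_interleave_blocks_eqD[of xs ss l l' i j] room xs(1) ss(3) by (simp add: cyc_def)
  qed
qed

lemma card_colourings_without_rainbow_cycle_through_le:
  assumes k: "2 \<le> k" and S: "S \<subseteq> {..<n}" "card S = k"
  shows "real (card {f \<in> nsets {..<n} 2 \<rightarrow>\<^sub>E {..<2 * k - 1}.
                      \<not> (\<exists>vs. rainbow_cycle n (\<lambda>u v. f {u, v}) vs \<and> S \<subseteq> set vs)})
           \<le> real (2 * k - 1) * (1 - 1 / real (2 * k - 1) ^ (2 * k - 2)) ^ ((n - k) div (k - 1))
              * real (2 * k - 1) ^ card (nsets {..<n} 2)"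
    (is "real (card ?bad) \<le> ?bound")
proof -
  let ?m = "2 * k - 1" and ?E = "nsets {..<n} 2"
  obtain e cyc where e: "e \<in> ?E"
    and cyc: "\<And>l. l < (n - k) div (k - 1) \<Longrightarrow>
         length (cyc l) = Suc (2 * k - 2) \<and> distinct (cyc l) \<and> set (cyc l) \<subseteq> {..<n}
         \<and> cycle_edge (cyc l) (2 * k - 2) = e \<and> S \<subseteq> set (cyc l)"
    and disj: "\<And>l l' i j. l < (n - k) div (k - 1) \<Longrightarrow> l' < (n - k) div (k - 1) \<Longrightarrow>
         i < 2 * k - 2 \<Longrightarrow> j < 2 * k - 2 \<Longrightarrow> cycle_edge (cyc l) i = cycle_edge (cyc l') j \<Longrightarrow> l = l'"
    using cycle_packing[OF k S] by blast
  have "?bad \<subseteq> {f \<in> ?E \<rightarrow>\<^sub>E {..<?m}. \<forall>l<(n - k) div (k - 1). \<not> rainbow_cycle n (\<lambda>u v. f {u, v}) (cyc l)}"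
  proof
    fix f assume "f \<in> ?bad"
    then have "f \<in> ?E \<rightarrow>\<^sub>E {..<?m}" "\<And>l. S \<subseteq> set (cyc l) \<Longrightarrow> \<not> rainbow_cycle n (\<lambda>u v. f {u, v}) (cyc l)"
      by auto
    then show "f \<in> {f \<in> ?E \<rightarrow>\<^sub>E {..<?m}. \<forall>l<(n - k) div (k - 1). \<not> rainbow_cycle n (\<lambda>u v. f {u, v}) (cyc l)}"
      using cyc by blast
  qed
  then have "card ?bad \<le> card {f \<in> ?E \<rightarrow>\<^sub>E {..<?m}.
      \<forall>l<(n - k) div (k - 1). \<not> rainbow_cycle n (\<lambda>u v. f {u, v}) (cyc l)}"
    by (intro card_mono) (simp_all add: finite_PiE finite_imp_finite_nsets)
  also have "real \<dots> \<le> ?bound"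
    using k by (intro card_colourings_without_rainbow_cycle_le[OF _ disj e]) (use cyc in auto)
  finally show ?thesis
    by simp
qed

lemma exists_k_rainbow_cyclic_colouring:
  assumes k: "2 \<le> k"
    and small: "real (n choose k) * (1 - 1 / real (2 * k - 1) ^ (2 * k - 2)) ^ ((n - k) div (k - 1))
                  < 1 / real (2 * k - 1)"
  shows "\<exists>c. edge_colouring n (2 * k - 1) c \<and> k_rainbow_cyclic n k c"
proof -
  let ?m = "2 * k - 1" and ?E = "nsets {..<n} 2"
  let ?bound = "real ?m * (1 - 1 / real ?m ^ (2 * k - 2)) ^ ((n - k) div (k - 1)) * real ?m ^ card ?E"
  let ?Ss = "{S. S \<subseteq> {..<n} \<and> card S = k}"
  define bad where "bad S = {f \<in> ?E \<rightarrow>\<^sub>E {..<?m}.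
    \<not> (\<exists>vs. rainbow_cycle n (\<lambda>u v. f {u, v}) vs \<and> S \<subseteq> set vs)}" for S
  have bad_le: "real (card (bad S)) \<le> ?bound" if "S \<in> ?Ss" for S
    using that card_colourings_without_rainbow_cycle_through_le[OF k, of S n] by (simp add: bad_def)
  have fin: "finite ?Ss"
    by (rule finite_subset[of _ "Pow {..<n}"]) auto
  have "card (\<Union>S\<in>?Ss. bad S) \<le> (\<Sum>S\<in>?Ss. card (bad S))"
    using fin by (rule card_UN_le)
  then have "real (card (\<Union>S\<in>?Ss. bad S)) \<le> (\<Sum>S\<in>?Ss. real (card (bad S)))"
    by (simp only: of_nat_sum[symmetric] of_nat_le_iff)
  also have "\<dots> \<le> real (n choose k) * ?bound"
    using sum_mono[of ?Ss "\<lambda>S. real (card (bad S))" "\<lambda>_. ?bound"] bad_le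
    by (simp add: n_subsets)
  also have "\<dots> = (real (n choose k) * (1 - 1 / real ?m ^ (2 * k - 2)) ^ ((n - k) div (k - 1)) * real ?m)
      * real ?m ^ card ?E"
    by (simp only: mult_ac)
  also have "\<dots> < 1 * real ?m ^ card ?E"
  proof (rule mult_strict_right_mono)
    show "real (n choose k) * (1 - 1 / real ?m ^ (2 * k - 2)) ^ ((n - k) div (k - 1)) * real ?m < 1"
      using small k by (simp add: field_simps)
  qed (use k in simp)
  also have "\<dots> = real (card (?E \<rightarrow>\<^sub>E {..<?m}))"
    by (simp add: card_PiE finite_imp_finite_nsets)
  finally have "card (\<Union>S\<in>?Ss. bad S) < card (?E \<rightarrow>\<^sub>E {..<?m})"
    by (simp only: of_nat_less_iff)
  moreover have "finite (\<Union>S\<in>?Ss. bad S)"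
    by (rule finite_subset[of _ "?E \<rightarrow>\<^sub>E {..<?m}"]) (auto simp: bad_def finite_PiE finite_imp_finite_nsets)
  ultimately have "\<not> ?E \<rightarrow>\<^sub>E {..<?m} \<subseteq> (\<Union>S\<in>?Ss. bad S)"
    using card_mono by (meson not_le)
  then obtain f where f: "f \<in> ?E \<rightarrow>\<^sub>E {..<?m}" "\<forall>S\<in>?Ss. f \<notin> bad S"
    by blast
  have "edge_colouring n ?m (\<lambda>u v. f {u, v})"
    using f(1) by (rule edge_colouring_pair_colouring)
  moreover have "k_rainbow_cyclic n k (\<lambda>u v. f {u, v})"
    using f by (auto simp: k_rainbow_cyclic_def bad_def)
  ultimately show ?thesis
    by blast
qed

lemma tendsto_poly_times_geometric:
  fixes \<rho> :: real
  assumes "0 \<le> \<rho>" "\<rho> < 1" "0 < K"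
  shows "(\<lambda>T. (real T + 1) ^ K * \<rho> ^ T) \<longlonglongrightarrow> 0"
proof -
  define \<sigma> where "\<sigma> = root K \<rho>"
  have \<sigma>: "0 \<le> \<sigma>" "\<sigma> < 1" "\<sigma> ^ K = \<rho>"
    using assms by (simp_all add: \<sigma>_def)
  have "(\<lambda>T. real T * \<sigma> ^ T + \<sigma> ^ T) \<longlonglongrightarrow> 0 + 0"
    using \<sigma> by (intro tendsto_add powser_times_n_limit_0 LIMSEQ_power_zero) auto
  then have "(\<lambda>T. ((real T + 1) * \<sigma> ^ T) ^ K) \<longlonglongrightarrow> 0 ^ K"
    by (intro tendsto_power) (simp add: algebra_simps)
  moreover have "((real T + 1) * \<sigma> ^ T) ^ K = (real T + 1) ^ K * \<rho> ^ T" for T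
    by (simp add: power_mult_distrib \<sigma>(3) flip: power_mult) (simp add: mult.commute power_mult \<sigma>(3))
  ultimately show ?thesis
    using assms(3) by (simp add: zero_power)
qed

lemma tendsto_binomial_times_geometric:
  fixes \<rho> :: real
  assumes \<rho>: "0 \<le> \<rho>" "\<rho> < 1" and "0 < k" "0 < d"
  shows "(\<lambda>n. real (n choose k) * \<rho> ^ ((n - k) div d)) \<longlonglongrightarrow> 0"
proof (rule tendsto_sandwich[where f = "\<lambda>_. 0"])
  let ?T = "\<lambda>n. (n - k) div d"
  have "filterlim ?T at_top sequentially"
    unfolding filterlim_at_top eventually_sequentially
  proof (intro allI exI impI)
    fix Z n :: nat assume "k + Z * d \<le> n"
    then have "Z * d div d \<le> (n - k) div d"
      by (intro div_le_mono) linarith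
    then show "Z \<le> (n - k) div d"
      using \<open>0 < d\<close> by simp
  qed
  then have "(\<lambda>n. (real (?T n) + 1) ^ k * \<rho> ^ ?T n) \<longlonglongrightarrow> 0"
    by (rule filterlim_compose[OF tendsto_poly_times_geometric[OF \<rho> \<open>0 < k\<close>]])
  then show "(\<lambda>n. real (k + d) ^ k * ((real (?T n) + 1) ^ k * \<rho> ^ ?T n)) \<longlonglongrightarrow> 0"
    by (rule tendsto_mult_right_zero)
  have "real (n choose k) * \<rho> ^ ?T n \<le> real (k + d) ^ k * ((real (?T n) + 1) ^ k * \<rho> ^ ?T n)" for n
  proof -
    have "?T n * d + (n - k) mod d = n - k" "(n - k) mod d < d"
      using \<open>0 < d\<close> by (simp_all only: div_mult_mod_eq mod_less_divisor)
    then have "n \<le> k * ?T n + k + d * ?T n + d"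
      by (simp only: mult.commute[of d])
    then have "n \<le> (k + d) * (?T n + 1)"
      by (simp add: algebra_simps)
    then have "n ^ k \<le> ((k + d) * (?T n + 1)) ^ k"
      by (rule power_mono) simp
    moreover have "n choose k \<le> n ^ k"
      by (cases "k \<le> n") (simp_all add: binomial_le_pow binomial_eq_0)
    ultimately have "n choose k \<le> ((k + d) * (?T n + 1)) ^ k"
      by linarith
    then have "n choose k \<le> (k + d) ^ k * (?T n + 1) ^ k"
      by (simp only: power_mult_distrib)
    then have "real (n choose k) \<le> real ((k + d) ^ k * (?T n + 1) ^ k)"
      by (simp only: of_nat_le_iff)
    also have "\<dots> = real (k + d) ^ k * (real (?T n) + 1) ^ k"
      by (simp add: add.commute)
    finally have "real (n choose k) \<le> real (k + d) ^ k * (real (?T n) + 1) ^ k" .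
    then show ?thesis
      using \<rho>(1) by (simp add: mult_right_mono flip: mult.assoc)
  qed
  then show "\<forall>\<^sub>F n in sequentially. real (n choose k) * \<rho> ^ ?T n \<le> real (k + d) ^ k * ((real (?T n) + 1) ^ k * \<rho> ^ ?T n)"
    by simp
  show "\<forall>\<^sub>F n in sequentially. 0 \<le> real (n choose k) * \<rho> ^ ?T n"
    using \<rho>(1) by simp
qed (rule tendsto_const)

lemma eventually_exists_k_rainbow_cyclic_colouring:
  assumes k: "2 \<le> k"
  shows "eventually (\<lambda>n. \<exists>c. edge_colouring n (2 * k - 1) c \<and> k_rainbow_cyclic n k c) sequentially"
proof -
  let ?m = "2 * k - 1"
  let ?\<rho> = "1 - 1 / real ?m ^ (2 * k - 2)"
  have "1 \<le> real ?m ^ (2 * k - 2)"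
    using k by simp
  then have "0 < 1 / real ?m ^ (2 * k - 2)" "1 / real ?m ^ (2 * k - 2) \<le> 1"
    using k by (simp_all add: divide_le_eq_1)
  then have "0 \<le> ?\<rho>" "?\<rho> < 1"
    by linarith+
  then have "(\<lambda>n. real (n choose k) * ?\<rho> ^ ((n - k) div (k - 1))) \<longlonglongrightarrow> 0"
    using k by (intro tendsto_binomial_times_geometric) auto
  moreover have "0 < 1 / real ?m"
    using k by simp
  ultimately have "eventually (\<lambda>n. real (n choose k) * ?\<rho> ^ ((n - k) div (k - 1)) < 1 / real ?m) sequentially"
    by (rule order_tendstoD(2))
  then show ?thesis
    by (rule eventually_mono) (rule exists_k_rainbow_cyclic_colouring[OF k])
qed

theorem theorem3p2:
  shows "(\<forall>n\<ge>3. crx 1 n = 3 \<and> crx 2 n = 3) \<and>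
         (\<forall>k\<ge>3. \<exists>N. \<forall>n\<ge>N. crx k n = 2 * k - 1)"
proof (intro conjI allI impI)
  fix n :: nat assume "3 \<le> n"
  then show "crx 1 n = 3" "crx 2 n = 3"
    by (rule crx_1_and_2)+
next
  fix k :: nat assume "3 \<le> k"
  then have "eventually (\<lambda>n. (\<exists>c. edge_colouring n (2 * k - 1) c \<and> k_rainbow_cyclic n k c)
      \<and> (\<forall>m c. edge_colouring n m c \<and> k_rainbow_cyclic n k c \<longrightarrow> 2 * k - 1 \<le> m)) sequentially"
    by (intro eventually_conj eventually_exists_k_rainbow_cyclic_colouring eventually_colours_ge) simp
  then show "\<exists>N. \<forall>n\<ge>N. crx k n = 2 * k - 1"
    unfolding eventually_sequentially by (metis crx_eqI)
qed

end
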